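(* Let $p$ be a prime, $n\ge 1$ an integer, $\mathbb{F}=\mathbb{F}_{p^n}$ and $F=p^n$. Let $k$ be an integer with $2\le k\le F$, and let $\theta$ and $\delta\ge 0$ be real numbers. Suppose $f,g:\mathbb{F}\to[0,1]$ satisfy $f(m)\ge g(m)\ge 0$ for all $m\in\mathbb{F}$, and $$\mathbb{E}(f)\ \ge\ \mathbb{E}(g)\ \ge\ \max\left(F^{-\theta},\ 8p^{-1/2}k^{-1}\right).$$ Suppose further that $\sigma_k\le \delta^2F^2$. Then $$\Lambda_3(f,g,f)\ \ge\ \frac{p^{-2}\binom{k}{2}^{-1}F^{-4\theta}}{128}-\frac{9\delta F^{-2\theta}}{8}\quad\text{and}\quad \Lambda_3(g,f,f)\ \ge\ \frac{p^{-2}\binom{k}{2}^{-1}F^{-4\theta}}{128}-\frac{9\delta F^{-2\theta}}{8}.$$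
   Context: For $h:\mathbb{F}\to\mathbb{C}$, $\mathbb{E}(h)=F^{-1}\sum_{m\in\mathbb{F}}h(m)$. Identify $\mathbb{F}$ with $\mathbb{F}_p^n$ via a fixed standard $\mathbb{F}_p$-basis, and let $a\cdot m$ be the dot product. With $\omega=e^{2\pi i/p}$, $\hat h(a)=\sum_{m}h(m)\omega^{a\cdot m}$. Enumerate $\mathbb{F}=\{a_1,\dots,a_F\}$ so that $|\hat f(a_1)|\ge|\hat f(a_2)|\ge\cdots\ge|\hat f(a_F)|$ and put $f_j=\hat f(a_j)$; then $\sigma_i=\sum_{i<j\le F}|f_j|^2$ (the tail of the spectral $L^2$ norm of $\hat f$). For $f_1,f_2,f_3:\mathbb{F}\to\mathbb{C}$ (here meaning functions), $\Lambda_3(f_1,f_2,f_3)=F^{-2}\sum_{m,d\in\mathbb{F}}f_1(m)f_2(m+d)f_3(m+2d)$. *)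

theory Defs
  imports "HOL-Analysis.Analysis"
begin

text \<open>The field \<open>F_{p^n}\<close> is identified with \<open>F_p^n\<close> via a fixed basis.\<close>

definition Fv :: "nat \<Rightarrow> nat \<Rightarrow> (nat \<Rightarrow> nat) set" where
  "Fv p n = {m. \<forall>i. (i < n \<longrightarrow> m i < p) \<and> (n \<le> i \<longrightarrow> m i = 0)}"

definition vadd :: "nat \<Rightarrow> (nat \<Rightarrow> nat) \<Rightarrow> (nat \<Rightarrow> nat) \<Rightarrow> (nat \<Rightarrow> nat)" where
  "vadd p x y = (\<lambda>i. (x i + y i) mod p)"

definition dotp :: "nat \<Rightarrow> (nat \<Rightarrow> nat) \<Rightarrow> (nat \<Rightarrow> nat) \<Rightarrow> nat" where
  "dotp n a m = (\<Sum>i<n. a i * m i)"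

definition Ex :: "nat \<Rightarrow> nat \<Rightarrow> ((nat \<Rightarrow> nat) \<Rightarrow> 'a::field) \<Rightarrow> 'a" where
  "Ex p n h = (\<Sum>m\<in>Fv p n. h m) / of_nat (card (Fv p n))"

definition fhat :: "nat \<Rightarrow> nat \<Rightarrow> ((nat \<Rightarrow> nat) \<Rightarrow> complex) \<Rightarrow> (nat \<Rightarrow> nat) \<Rightarrow> complex" where
  "fhat p n h a = (\<Sum>m\<in>Fv p n. h m * exp (2 * pi * \<i> / of_nat p) ^ dotp n a m)"

definition sorted_enum :: "nat \<Rightarrow> nat \<Rightarrow> ((nat \<Rightarrow> nat) \<Rightarrow> complex) \<Rightarrow> (nat \<Rightarrow> (nat \<Rightarrow> nat)) \<Rightarrow> bool" where
  "sorted_enum p n h e \<longleftrightarrow> bij_betw e {1..card (Fv p n)} (Fv p n) \<and>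
     (\<forall>i j. 1 \<le> i \<longrightarrow> i \<le> j \<longrightarrow> j \<le> card (Fv p n) \<longrightarrow>
        norm (fhat p n h (e j)) \<le> norm (fhat p n h (e i)))"

text \<open>\<open>\<sigma>_i = \<Sum>_{i<j\<le>F} |f_j|^2\<close> (independent of the choice of sorted enumeration).\<close>
definition sigma :: "nat \<Rightarrow> nat \<Rightarrow> ((nat \<Rightarrow> nat) \<Rightarrow> complex) \<Rightarrow> nat \<Rightarrow> real" where
  "sigma p n h i = (let e = (SOME e. sorted_enum p n h e) in
     (\<Sum>j\<in>{i<..card (Fv p n)}. (norm (fhat p n h (e j)))\<^sup>2))"

definition Lambda3 :: "nat \<Rightarrow> nat \<Rightarrow> ((nat \<Rightarrow> nat) \<Rightarrow> 'a::field) \<Rightarrow> ((nat \<Rightarrow> nat) \<Rightarrow> 'a)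
    \<Rightarrow> ((nat \<Rightarrow> nat) \<Rightarrow> 'a) \<Rightarrow> 'a" where
  "Lambda3 p n f1 f2 f3 =
     (\<Sum>m\<in>Fv p n. \<Sum>d\<in>Fv p n.
        f1 m * f2 (vadd p m d) * f3 (vadd p m (vadd p d d))) / of_nat (card (Fv p n))^2"

end

(*
  Split f = f_S + f_T, where f_S keeps the k largest Fourier coefficients of f (the frequency
  set S) and f_T the others, so that by Parseval the hypothesis on sigma_k says
  ||f_T||_2^2 <= delta^2 F.  Both Lambda_3(f,g,f) and Lambda_3(g,f,f) are counts
  W = sum_{m,d} g(m) f(m + s d) f(m + t d) with s, t invertible mod p (for Lambda_3(g,f,f)
  this needs p odd; for p = 2 it degenerates to (sum g f)(sum f) / F^2 >= E(g)^3).

  Put D = s S + t S, a set of at most k^2 frequencies, and weight the count by the character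
  sum K_D(d) = sum_{l in D} chi_l(d).  Since |K_D| <= |D|, the weighted count is at most |D| W;
  with f_S in both slots it equals F sum_m g(m) f_S(m)^2 exactly, because K_D detects every
  frequency pair of f_S.  Replacing f_S by f costs error terms bounded by Cauchy-Schwarz and
  ||f_T||_2, and sum g f^2 >= sum g^3 >= F E(g)^3 by convexity.  Hence
  |D| W / F^2 >= E(g)^3 - O(delta (1 + |D| E(g))), and comparing this with the claimed bound is
  elementary, depending on whether delta is small compared with E(g)^2 / (p^2 k^2).
*)

theory Submission
  imports Defs
begin

section \<open>Vectors modulo p\<close>

definition vzero :: "nat \<Rightarrow> nat" where
  "vzero = (\<lambda>_. 0)"

definition vsmul :: "nat \<Rightarrow> nat \<Rightarrow> (nat \<Rightarrow> nat) \<Rightarrow> (nat \<Rightarrow> nat)" where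
  "vsmul p s x = (\<lambda>i. (s * x i) mod p)"

definition vneg :: "nat \<Rightarrow> (nat \<Rightarrow> nat) \<Rightarrow> (nat \<Rightarrow> nat)" where
  "vneg p x = vsmul p (p - 1) x"

lemma Fv_eq_image_PiE:
  "Fv p n = (\<lambda>m i. if i < n then m i else 0) ` (PiE {..<n} (\<lambda>_. {..<p}))"
proof (intro equalityI subsetI)
  fix m assume m: "m \<in> Fv p n"
  then have "m = (\<lambda>i. if i < n then restrict m {..<n} i else 0)"
    by (auto simp: Fv_def fun_eq_iff)
  moreover have "restrict m {..<n} \<in> PiE {..<n} (\<lambda>_. {..<p})"
    using m by (auto simp: Fv_def)
  ultimately show "m \<in> (\<lambda>m i. if i < n then m i else 0) ` (PiE {..<n} (\<lambda>_. {..<p}))"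
    by blast
qed (auto simp: Fv_def PiE_def Pi_def)

lemma finite_Fv [simp]: "finite (Fv p n)"
  unfolding Fv_eq_image_PiE by (intro finite_imageI finite_PiE) auto

lemma card_Fv [simp]: "card (Fv p n) = p ^ n"
proof -
  have "inj_on (\<lambda>m i. if i < n then m i else 0) (PiE {..<n} (\<lambda>_. {..<p}))"
  proof (rule inj_onI)
    fix x y
    assume xy: "x \<in> PiE {..<n} (\<lambda>_. {..<p})" "y \<in> PiE {..<n} (\<lambda>_. {..<p})"
      and eq: "(\<lambda>i. if i < n then x i else 0) = (\<lambda>i. if i < n then y i else 0)"
    show "x = y"
    proof (rule PiE_ext[OF xy])
      fix i assume "i \<in> {..<n}"
      then show "x i = y i"
        using fun_cong[OF eq, of i] by simp
    qed
  qed
  then show ?thesis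
    unfolding Fv_eq_image_PiE by (simp add: card_image card_PiE)
qed

lemma vadd_commute: "vadd p x y = vadd p y x"
  by (simp add: vadd_def add.commute)

lemma vadd_assoc: "vadd p (vadd p x y) z = vadd p x (vadd p y z)"
  by (simp add: vadd_def fun_eq_iff mod_add_left_eq mod_add_right_eq add.assoc)

lemma vsmul_vsmul: "vsmul p s (vsmul p t x) = vsmul p (s * t) x"
  by (simp add: vsmul_def fun_eq_iff mod_mult_right_eq mult.assoc)

lemma vsmul_2: "vsmul p 2 x = vadd p x x"
  by (simp add: vsmul_def vadd_def fun_eq_iff mult_2)

text \<open>Most of the argument works in \<open>(\<int>/p\<int>)\<^sup>n\<close> for any \<open>p > 1\<close>; primality is only
  used to invert \<open>2\<close> when \<open>p\<close> is odd.\<close>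

locale mod_vectors =
  fixes p n :: nat
  assumes one_less_p: "1 < p"
begin

lemma Fv_mod [simp]: "x \<in> Fv p n \<Longrightarrow> x i mod p = x i"
  by (cases "i < n") (auto simp: Fv_def)

lemma vadd_in_Fv [simp]: "x \<in> Fv p n \<Longrightarrow> y \<in> Fv p n \<Longrightarrow> vadd p x y \<in> Fv p n"
  using one_less_p by (auto simp: Fv_def vadd_def)

lemma vsmul_in_Fv [simp]: "x \<in> Fv p n \<Longrightarrow> vsmul p s x \<in> Fv p n"
  using one_less_p by (auto simp: Fv_def vsmul_def)

lemma vadd_vzero [simp]: "x \<in> Fv p n \<Longrightarrow> vadd p x vzero = x"
  by (simp add: vadd_def vzero_def)

lemma vzero_vadd [simp]: "x \<in> Fv p n \<Longrightarrow> vadd p vzero x = x"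
  by (simp add: vadd_commute[of p vzero])

lemma vneg_in_Fv [simp]: "x \<in> Fv p n \<Longrightarrow> vneg p x \<in> Fv p n"
  by (simp add: vneg_def)

lemma vadd_vneg [simp]: "x \<in> Fv p n \<Longrightarrow> vadd p x (vneg p x) = vzero"
proof -
  have "x i + (p - 1) * x i = p * x i" for i
    using one_less_p by (cases p) auto
  then show ?thesis
    by (simp add: vneg_def vadd_def vsmul_def vzero_def fun_eq_iff mod_add_right_eq)
qed

lemma vneg_vadd [simp]: "x \<in> Fv p n \<Longrightarrow> vadd p (vneg p x) x = vzero"
  by (simp add: vadd_commute)

lemma vsmul_eq_self:
  assumes "x \<in> Fv p n" "r mod p = 1"
  shows "vsmul p r x = x"
proof -
  have "r * x i mod p = (r mod p) * x i mod p" for i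
    by (simp add: mod_mult_left_eq)
  with assms show ?thesis
    by (simp add: vsmul_def fun_eq_iff)
qed

lemma vadd_vneg_eq_vzero_iff:
  assumes "x \<in> Fv p n" "y \<in> Fv p n"
  shows "vadd p x (vneg p y) = vzero \<longleftrightarrow> x = y"
proof
  assume "vadd p x (vneg p y) = vzero"
  then have "vadd p (vadd p x (vneg p y)) y = y"
    using assms by simp
  then show "x = y"
    using assms by (simp add: vadd_assoc)
qed (use assms in simp)

lemma bij_betw_vadd_right:
  assumes "x \<in> Fv p n"
  shows "bij_betw (\<lambda>y. vadd p y x) (Fv p n) (Fv p n)"
  by (rule bij_betwI[where g = "\<lambda>y. vadd p y (vneg p x)"]) (use assms in \<open>auto simp: vadd_assoc\<close>)

lemma sum_vadd_right:
  assumes "x \<in> Fv p n"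
  shows "(\<Sum>y\<in>Fv p n. h (vadd p y x)) = (\<Sum>y\<in>Fv p n. h y)"
  by (rule sum.reindex_bij_betw[OF bij_betw_vadd_right[OF assms]])

lemma bij_betw_vsmul:
  assumes "s' * s mod p = 1"
  shows "bij_betw (vsmul p s) (Fv p n) (Fv p n)"
proof (rule bij_betwI[where g = "vsmul p s'"])
  fix y assume "y \<in> Fv p n"
  then show "vsmul p s' (vsmul p s y) = y" and "vsmul p s (vsmul p s' y) = y"
    using assms by (simp_all add: vsmul_vsmul vsmul_eq_self mult.commute[of s])
qed auto

lemma sum_vadd_vsmul:
  assumes "s' * s mod p = 1" "m \<in> Fv p n"
  shows "(\<Sum>d\<in>Fv p n. h (vadd p m (vsmul p s d))) = (\<Sum>y\<in>Fv p n. h y)"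
proof -
  have "(\<Sum>d\<in>Fv p n. h (vadd p m (vsmul p s d))) = (\<Sum>d\<in>Fv p n. h (vadd p d m))"
    using sum.reindex_bij_betw[OF bij_betw_vsmul[OF assms(1)], of "\<lambda>d. h (vadd p m d)"]
    by (simp only: vadd_commute[of p m])
  also have "\<dots> = (\<Sum>y\<in>Fv p n. h y)"
    by (rule sum_vadd_right[OF assms(2)])
  finally show ?thesis .
qed

end

section \<open>Characters and Fourier analysis\<close>

definition chi :: "nat \<Rightarrow> nat \<Rightarrow> (nat \<Rightarrow> nat) \<Rightarrow> (nat \<Rightarrow> nat) \<Rightarrow> complex" where
  "chi p n a m = exp (2 * pi * \<i> / of_nat p) ^ dotp n a m"

definition spectral_part ::
    "nat \<Rightarrow> nat \<Rightarrow> (nat \<Rightarrow> nat) set \<Rightarrow> ((nat \<Rightarrow> nat) \<Rightarrow> complex) \<Rightarrow> (nat \<Rightarrow> nat) \<Rightarrow> complex" where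
  "spectral_part p n A h m = (\<Sum>a\<in>A. fhat p n h a * cnj (chi p n a m)) / of_nat (p ^ n)"

context mod_vectors
begin

lemma root_of_unity_pow_mod:
  "exp (2 * pi * \<i> / of_nat p) ^ x = exp (2 * pi * \<i> / of_nat p) ^ (x mod p)"
proof -
  have "exp (2 * pi * \<i> / of_nat p) ^ p = exp (of_nat p * (2 * pi * \<i> / of_nat p))"
    by (rule exp_of_nat_mult[symmetric])
  also have "\<dots> = 1"
    using one_less_p by simp
  finally have "exp (2 * pi * \<i> / of_nat p) ^ p = 1" .
  moreover have "x = p * (x div p) + x mod p"
    by simp
  then have "exp (2 * pi * \<i> / of_nat p) ^ x
      = (exp (2 * pi * \<i> / of_nat p) ^ p) ^ (x div p) * exp (2 * pi * \<i> / of_nat p) ^ (x mod p)"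
    by (metis power_add power_mult)
  ultimately show ?thesis
    by simp
qed

lemma root_of_unity_pow_cong:
  "x mod p = y mod p \<Longrightarrow> exp (2 * pi * \<i> / of_nat p) ^ x = exp (2 * pi * \<i> / of_nat p) ^ y"
  by (metis root_of_unity_pow_mod)

lemma root_of_unity_pow_ne_1:
  assumes "0 < j" "j < p"
  shows "exp (2 * pi * \<i> / of_nat p) ^ j \<noteq> 1"
proof
  assume "exp (2 * pi * \<i> / of_nat p) ^ j = 1"
  then have "exp (of_nat j * (2 * pi * \<i> / of_nat p)) = 1"
    by (metis exp_of_nat_mult)
  then obtain z :: int where "Im (of_nat j * (2 * pi * \<i> / of_nat p)) = of_int (2 * z) * pi"
    by (auto simp: exp_eq_1)
  then have "real j = real_of_int z * p"
    using assms by (simp add: field_simps)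
  then have "int j = z * int p"
    by (metis of_int_eq_iff of_int_mult of_int_of_nat_eq)
  then have "p dvd j"
    by (metis dvd_triv_right int_dvd_int_iff mult.commute)
  with assms show False
    by (simp add: nat_dvd_not_less)
qed

lemma norm_chi [simp]: "norm (chi p n a m) = 1"
  by (simp add: chi_def norm_power)

lemma chi_commute: "chi p n a m = chi p n m a"
  by (simp add: chi_def dotp_def mult.commute)

lemma chi_vadd: "chi p n a (vadd p x y) = chi p n a x * chi p n a y"
proof -
  have "dotp n a (vadd p x y) mod p = (\<Sum>i<n. a i * ((x i + y i) mod p) mod p) mod p"
    by (simp add: dotp_def vadd_def mod_sum_eq)
  also have "\<dots> = (\<Sum>i<n. a i * (x i + y i) mod p) mod p"
    by (simp add: mod_mult_right_eq)
  also have "\<dots> = (dotp n a x + dotp n a y) mod p"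
    by (simp add: dotp_def mod_sum_eq distrib_left sum.distrib)
  finally have "exp (2 * pi * \<i> / of_nat p) ^ dotp n a (vadd p x y)
      = exp (2 * pi * \<i> / of_nat p) ^ (dotp n a x + dotp n a y)"
    by (rule root_of_unity_pow_cong)
  then show ?thesis
    by (simp add: chi_def power_add)
qed

lemma chi_vadd_left: "chi p n (vadd p x y) a = chi p n x a * chi p n y a"
  by (simp add: chi_commute chi_vadd)

lemma chi_vsmul: "chi p n a (vsmul p s x) = chi p n (vsmul p s a) x"
proof -
  have "dotp n a (vsmul p s x) mod p = (\<Sum>i<n. a i * ((s * x i) mod p) mod p) mod p"
    by (simp add: dotp_def vsmul_def mod_sum_eq)
  also have "\<dots> = (\<Sum>i<n. ((s * a i) mod p) * x i mod p) mod p"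
    by (simp add: mod_mult_right_eq mod_mult_left_eq mult.left_commute mult.assoc)
  also have "\<dots> = dotp n (vsmul p s a) x mod p"
    by (simp add: dotp_def vsmul_def mod_sum_eq)
  finally show ?thesis
    unfolding chi_def by (rule root_of_unity_pow_cong)
qed

lemma chi_vzero_left [simp]: "chi p n vzero a = 1"
  by (simp add: chi_def dotp_def vzero_def)

lemma cnj_chi:
  assumes "a \<in> Fv p n"
  shows "cnj (chi p n a m) = chi p n (vneg p a) m"
proof -
  have "chi p n a m * chi p n (vneg p a) m = 1"
    using assms by (simp flip: chi_vadd_left)
  moreover have "chi p n a m * cnj (chi p n a m) = 1"
    by (simp add: complex_norm_square[symmetric])
  ultimately show ?thesis
    by (metis mult.left_commute mult.right_neutral mult.commute)
qed

lemma sum_chi: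
  assumes "c \<in> Fv p n"
  shows "(\<Sum>u\<in>Fv p n. chi p n c u) = (if c = vzero then p ^ n else 0)"
proof (cases "c = vzero")
  case False
  then obtain i where ci: "c i \<noteq> 0"
    by (auto simp: vzero_def)
  then have i: "i < n"
    using assms by (simp add: Fv_def) (metis not_le less_not_refl)
  define e where "e = (\<lambda>j. if j = i then 1 else (0::nat))"
  have e: "e \<in> Fv p n"
    using one_less_p i by (auto simp: Fv_def e_def)
  have "dotp n c e = c i"
    using i by (simp add: dotp_def e_def if_distrib cong: if_cong)
  moreover have "c i < p"
    using assms i by (simp add: Fv_def)
  ultimately have "chi p n c e \<noteq> 1"
    using root_of_unity_pow_ne_1 ci by (simp add: chi_def)
  have "(\<Sum>u\<in>Fv p n. chi p n c u) = (\<Sum>u\<in>Fv p n. chi p n c (vadd p u e))"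
    by (rule sum_vadd_right[OF e, symmetric])
  also have "\<dots> = (\<Sum>u\<in>Fv p n. chi p n c u) * chi p n c e"
    by (simp add: chi_vadd sum_distrib_right)
  finally show ?thesis
    using \<open>chi p n c e \<noteq> 1\<close> False by (simp add: algebra_simps)
qed simp

lemma chi_orthogonal:
  assumes "a \<in> Fv p n" "b \<in> Fv p n"
  shows "(\<Sum>u\<in>Fv p n. chi p n a u * cnj (chi p n b u)) = (if a = b then p ^ n else 0)"
  using assms sum_chi[of "vadd p a (vneg p b)"]
  by (simp add: cnj_chi chi_vadd_left vadd_vneg_eq_vzero_iff)

lemma fhat_eq_sum_chi: "fhat p n h a = (\<Sum>x\<in>Fv p n. h x * chi p n a x)"
  by (simp add: fhat_def chi_def)

lemma spectral_part_Fv: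
  assumes "m \<in> Fv p n"
  shows "spectral_part p n (Fv p n) h m = h m"
proof -
  have "(\<Sum>a\<in>Fv p n. fhat p n h a * cnj (chi p n a m))
      = (\<Sum>a\<in>Fv p n. \<Sum>x\<in>Fv p n. h x * (chi p n x a * cnj (chi p n m a)))"
    by (simp add: fhat_eq_sum_chi sum_distrib_right chi_commute mult.assoc)
  also have "\<dots> = (\<Sum>x\<in>Fv p n. h x * (\<Sum>a\<in>Fv p n. chi p n x a * cnj (chi p n m a)))"
    by (subst sum.swap) (simp add: sum_distrib_left)
  also have "\<dots> = h m * of_nat (p ^ n)"
    using assms by (simp add: chi_orthogonal if_distrib cong: if_cong)
  finally show ?thesis
    using one_less_p by (simp add: spectral_part_def)
qed

lemma spectral_part_Un:
  assumes "finite A" "finite B" "A \<inter> B = {}"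
  shows "spectral_part p n (A \<union> B) h m = spectral_part p n A h m + spectral_part p n B h m"
  using assms by (simp add: spectral_part_def sum.union_disjoint add_divide_distrib)

lemma spectral_part_partition:
  assumes "S \<union> T = Fv p n" "S \<inter> T = {}" "m \<in> Fv p n"
  shows "h m = spectral_part p n S h m + spectral_part p n T h m"
proof -
  have "finite S" "finite T"
    using assms(1) finite_Fv by (metis finite_Un)+
  then show ?thesis
    using assms spectral_part_Fv spectral_part_Un by metis
qed

lemma parseval_spectral_part:
  assumes "A \<subseteq> Fv p n"
  shows "(\<Sum>m\<in>Fv p n. (cmod (spectral_part p n A h m))\<^sup>2) = (\<Sum>a\<in>A. (cmod (fhat p n h a))\<^sup>2) / real (p ^ n)"
proof -
  let ?H = "fhat p n h" and ?N = "of_nat (p ^ n) :: complex"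
  have "finite A"
    using assms by (rule finite_subset) simp
  have expand: "spectral_part p n A h m * cnj (spectral_part p n A h m)
      = (\<Sum>a\<in>A. \<Sum>b\<in>A. (?H a * cnj (chi p n a m)) * cnj (?H b * cnj (chi p n b m))) / ?N\<^sup>2" for m
    by (simp add: spectral_part_def sum_product cnj_sum power2_eq_square)
  have regroup: "(?H a * cnj (chi p n a m)) * cnj (?H b * cnj (chi p n b m))
      = ?H a * cnj (?H b) * (chi p n b m * cnj (chi p n a m))" for a b m
    by simp
  have "(\<Sum>m\<in>Fv p n. spectral_part p n A h m * cnj (spectral_part p n A h m))
      = (\<Sum>m\<in>Fv p n. \<Sum>a\<in>A. \<Sum>b\<in>A. ?H a * cnj (?H b) * (chi p n b m * cnj (chi p n a m))) / ?N\<^sup>2"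
    by (simp only: expand regroup sum_divide_distrib)
  also have "\<dots> = (\<Sum>a\<in>A. \<Sum>b\<in>A. ?H a * cnj (?H b) * (\<Sum>m\<in>Fv p n. chi p n b m * cnj (chi p n a m))) / ?N\<^sup>2"
    by (simp only: sum_distrib_left sum.swap[of _ "Fv p n"])
  also have "\<dots> = (\<Sum>a\<in>A. ?H a * cnj (?H a) * ?N) / ?N\<^sup>2"
    using assms \<open>finite A\<close> by (simp add: chi_orthogonal subsetD if_distrib sum.delta cong: if_cong)
  also have "\<dots> = (\<Sum>a\<in>A. ?H a * cnj (?H a)) / ?N"
    using one_less_p by (simp add: sum_distrib_right[symmetric] power2_eq_square)
  also have "\<dots> = complex_of_real ((\<Sum>a\<in>A. (cmod (?H a))\<^sup>2) / real (p ^ n))"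
    by (simp only: of_real_divide of_real_sum complex_norm_square of_real_of_nat_eq)
  finally have "complex_of_real (\<Sum>m\<in>Fv p n. (cmod (spectral_part p n A h m))\<^sup>2)
      = complex_of_real ((\<Sum>a\<in>A. (cmod (?H a))\<^sup>2) / real (p ^ n))"
    by (simp only: of_real_sum complex_norm_square)
  then show ?thesis
    by (rule of_real_eq_iff[THEN iffD1])
qed

lemma sorted_enum_exists: "\<exists>e. sorted_enum p n h e"
proof -
  obtain xs where xs: "set xs = Fv p n" "distinct xs"
    using finite_distinct_list[OF finite_Fv] by blast
  define ys where "ys = sort_key (\<lambda>a. - cmod (fhat p n h a)) xs"
  have ys: "set ys = Fv p n" "distinct ys" "sorted (map (\<lambda>a. - cmod (fhat p n h a)) ys)"
    using xs by (simp_all add: ys_def)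
  then have len: "length ys = p ^ n"
    using distinct_card by fastforce
  define e where "e = (\<lambda>j. ys ! (j - 1))"
  have "bij_betw (\<lambda>j. j - 1) {1..p ^ n} {..<length ys}"
    using len by (intro bij_betwI[where g = Suc]) auto
  moreover have "bij_betw ((!) ys) {..<length ys} (Fv p n)"
    using ys by (intro bij_betw_nth) simp_all
  ultimately have "bij_betw ((!) ys \<circ> (\<lambda>j. j - 1)) {1..p ^ n} (Fv p n)"
    by (rule bij_betw_trans)
  then have "bij_betw e {1..p ^ n} (Fv p n)"
    by (simp add: e_def comp_def)
  moreover have "norm (fhat p n h (e j)) \<le> norm (fhat p n h (e i))"
    if "1 \<le> i" "i \<le> j" "j \<le> p ^ n" for i j
    using sorted_nth_mono[OF ys(3), of "i - 1" "j - 1"] that len by (simp add: e_def)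
  ultimately show ?thesis
    unfolding sorted_enum_def by auto
qed

lemma spectral_partition:
  assumes "1 \<le> k" "k \<le> p ^ n"
  obtains S T where "S \<union> T = Fv p n" "S \<inter> T = {}" "S \<noteq> {}" "card S \<le> k"
    "(\<Sum>a\<in>T. (cmod (fhat p n h a))\<^sup>2) = sigma p n h k"
proof -
  define e where "e = (SOME e. sorted_enum p n h e)"
  have "sorted_enum p n h e"
    unfolding e_def using sorted_enum_exists by (rule someI_ex)
  then have bij: "bij_betw e {1..p ^ n} (Fv p n)"
    by (simp add: sorted_enum_def)
  then have inj: "inj_on e {1..p ^ n}" and surj: "e ` {1..p ^ n} = Fv p n"
    by (simp_all add: bij_betw_def)
  have tail: "{k<..p ^ n} \<subseteq> {1..p ^ n}" and head: "{1..p ^ n} - {k<..p ^ n} = {1..k}"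
    using assms by auto
  define T where "T = e ` {k<..p ^ n}"
  have "T \<subseteq> Fv p n"
    unfolding T_def surj[symmetric] using tail by (rule image_mono)
  then have "(Fv p n - T) \<union> T = Fv p n" "(Fv p n - T) \<inter> T = {}"
    by blast+
  moreover have "Fv p n - T = e ` {1..k}"
    unfolding T_def surj[symmetric] head[symmetric] using inj tail
    by (intro inj_on_image_set_diff[symmetric]) auto
  then have "Fv p n - T \<noteq> {}" "card (Fv p n - T) \<le> k"
    using assms(1) card_image_le[of "{1..k}" e] by simp_all
  moreover have "(\<Sum>a\<in>T. (cmod (fhat p n h a))\<^sup>2) = sigma p n h k"
    unfolding T_def sigma_def e_def[symmetric] Let_def
    using inj_on_subset[OF inj tail] by (simp add: sum.reindex)
  ultimately show ?thesis
    by (rule that)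
qed

end

section \<open>Twisted progression counts\<close>

definition char_sum :: "nat \<Rightarrow> nat \<Rightarrow> (nat \<Rightarrow> nat) set \<Rightarrow> (nat \<Rightarrow> nat) \<Rightarrow> complex" where
  "char_sum p n D d = (\<Sum>l\<in>D. chi p n l d)"

definition ap_count ::
    "nat \<Rightarrow> nat \<Rightarrow> nat \<Rightarrow> nat \<Rightarrow> ((nat \<Rightarrow> nat) \<Rightarrow> real) \<Rightarrow> ((nat \<Rightarrow> nat) \<Rightarrow> real) \<Rightarrow> ((nat \<Rightarrow> nat) \<Rightarrow> real) \<Rightarrow> real" where
  "ap_count p n s t g h1 h2 =
     (\<Sum>m\<in>Fv p n. \<Sum>d\<in>Fv p n. g m * h1 (vadd p m (vsmul p s d)) * h2 (vadd p m (vsmul p t d)))"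

definition twisted_ap_count :: "nat \<Rightarrow> nat \<Rightarrow> (nat \<Rightarrow> nat) set \<Rightarrow> nat \<Rightarrow> nat \<Rightarrow> ((nat \<Rightarrow> nat) \<Rightarrow> real)
    \<Rightarrow> ((nat \<Rightarrow> nat) \<Rightarrow> complex) \<Rightarrow> ((nat \<Rightarrow> nat) \<Rightarrow> complex) \<Rightarrow> complex" where
  "twisted_ap_count p n D s t g h1 h2 =
     (\<Sum>m\<in>Fv p n. \<Sum>d\<in>Fv p n.
        of_real (g m) * h1 (vadd p m (vsmul p s d)) * h2 (vadd p m (vsmul p t d)) * char_sum p n D d)"

lemma sum_swap_innermost:
  "(\<Sum>x\<in>A. \<Sum>y\<in>B. \<Sum>z\<in>C. f x y z) = (\<Sum>y\<in>B. \<Sum>z\<in>C. \<Sum>x\<in>A. f x y z)"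
  by (subst sum.swap) (simp only: sum.swap[of _ A])

lemma twisted_ap_count_diff:
  "twisted_ap_count p n D s t g (\<lambda>x. a x - b x) (\<lambda>x. a x - b x)
   = twisted_ap_count p n D s t g a a - twisted_ap_count p n D s t g b a
     - twisted_ap_count p n D s t g a b + twisted_ap_count p n D s t g b b"
  by (simp add: twisted_ap_count_def algebra_simps sum_subtractf sum.distrib)

lemma Re_square_diff_ge:
  fixes f g :: real and z :: complex
  assumes "0 \<le> f" "f \<le> 1" "0 \<le> g" "g \<le> 1"
  shows "g * f\<^sup>2 - 2 * (g * cmod z) - (cmod z)\<^sup>2 \<le> g * Re ((of_real f - z)\<^sup>2)"
proof -
  have "Re ((of_real f - z)\<^sup>2) = f\<^sup>2 - 2 * f * Re z + Re (z\<^sup>2)"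
    by (simp add: power2_eq_square algebra_simps)
  moreover have "- (cmod z)\<^sup>2 \<le> Re (z\<^sup>2)"
    using abs_Re_le_cmod[of "z\<^sup>2"] by (simp add: norm_power)
  moreover have "f * Re z \<le> cmod z"
    using assms complex_Re_le_cmod[of z] by (metis mult_left_le_one_le mult_left_mono norm_ge_zero order_trans)
  ultimately have "f\<^sup>2 - 2 * cmod z - (cmod z)\<^sup>2 \<le> Re ((of_real f - z)\<^sup>2)"
    by linarith
  then have "g * (f\<^sup>2 - 2 * cmod z - (cmod z)\<^sup>2) \<le> g * Re ((of_real f - z)\<^sup>2)"
    using assms(3) by (rule mult_left_mono)
  moreover have "g * (cmod z)\<^sup>2 \<le> (cmod z)\<^sup>2"
    using assms(3,4) by (simp add: mult_left_le_one_le)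
  ultimately show ?thesis
    by (simp add: algebra_simps)
qed

lemma sum_Re_square_diff_ge:
  fixes f g :: "'a \<Rightarrow> real" and z :: "'a \<Rightarrow> complex"
  assumes "\<forall>m\<in>A. 0 \<le> f m \<and> f m \<le> 1" "\<forall>m\<in>A. 0 \<le> g m \<and> g m \<le> 1"
  shows "(\<Sum>m\<in>A. g m * (f m)\<^sup>2) - 2 * (\<Sum>m\<in>A. g m * cmod (z m)) - (\<Sum>m\<in>A. (cmod (z m))\<^sup>2)
    \<le> Re (\<Sum>m\<in>A. of_real (g m) * (of_real (f m) - z m)\<^sup>2)"
proof -
  have "(\<Sum>m\<in>A. g m * (f m)\<^sup>2 - 2 * (g m * cmod (z m)) - (cmod (z m))\<^sup>2)
      \<le> (\<Sum>m\<in>A. g m * Re ((of_real (f m) - z m)\<^sup>2))"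
    using assms by (intro sum_mono Re_square_diff_ge) auto
  then show ?thesis
    by (simp add: Re_sum sum_subtractf sum_distrib_left)
qed

context mod_vectors
begin

lemma spectral_part_shifts_mult:
  "spectral_part p n S h (vadd p m (vsmul p s d)) * spectral_part p n S h (vadd p m (vsmul p t d))
   = (\<Sum>a\<in>S. \<Sum>b\<in>S. fhat p n h a * fhat p n h b * cnj (chi p n a m) * cnj (chi p n b m)
        * cnj (chi p n (vadd p (vsmul p s a) (vsmul p t b)) d)) / (of_nat (p ^ n))\<^sup>2"
proof -
  have regroup: "fhat p n h a * cnj (chi p n a (vadd p m (vsmul p s d)))
        * (fhat p n h b * cnj (chi p n b (vadd p m (vsmul p t d))))
      = fhat p n h a * fhat p n h b * cnj (chi p n a m) * cnj (chi p n b m)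
        * cnj (chi p n (vadd p (vsmul p s a) (vsmul p t b)) d)" for a b
    by (simp add: chi_vadd chi_vsmul chi_vadd_left mult_ac)
  show ?thesis
    by (simp add: spectral_part_def sum_product regroup power2_eq_square)
qed

lemma norm_char_sum_le: "cmod (char_sum p n D d) \<le> card D"
  using norm_sum[of "\<lambda>l. chi p n l d" D] by (simp add: char_sum_def)

lemma sum_cnj_chi_mult_char_sum:
  assumes "D \<subseteq> Fv p n" "c \<in> D"
  shows "(\<Sum>d\<in>Fv p n. cnj (chi p n c d) * char_sum p n D d) = of_nat (p ^ n)"
proof -
  have "finite D"
    using assms(1) by (rule finite_subset) simp
  have D: "l \<in> Fv p n" if "l \<in> D" for l
    using assms(1) that by blast
  have "(\<Sum>d\<in>Fv p n. cnj (chi p n c d) * char_sum p n D d)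
      = (\<Sum>l\<in>D. \<Sum>d\<in>Fv p n. chi p n l d * cnj (chi p n c d))"
    by (simp add: char_sum_def sum_distrib_left sum.swap[of _ "Fv p n"] mult.commute)
  also have "\<dots> = (\<Sum>l\<in>D. if l = c then of_nat (p ^ n) else 0)"
    using assms(2) by (intro sum.cong refl) (simp add: chi_orthogonal D)
  finally show ?thesis
    using \<open>finite D\<close> assms(2) by simp
qed

lemma twisted_ap_count_spectral_part:
  assumes "D \<subseteq> Fv p n" and sumset: "\<And>a b. a \<in> S \<Longrightarrow> b \<in> S \<Longrightarrow> vadd p (vsmul p s a) (vsmul p t b) \<in> D"
  shows "twisted_ap_count p n D s t g (spectral_part p n S h) (spectral_part p n S h)
    = of_nat (p ^ n) * (\<Sum>m\<in>Fv p n. of_real (g m) * (spectral_part p n S h m)\<^sup>2)"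
proof -
  let ?N = "of_nat (p ^ n) :: complex"
  let ?c = "\<lambda>a b. vadd p (vsmul p s a) (vsmul p t b)"
  let ?Y = "\<lambda>m a b. fhat p n h a * fhat p n h b * cnj (chi p n a m) * cnj (chi p n b m)"
  let ?w = "\<lambda>m. of_real (g m) / ?N\<^sup>2"
  have "of_real (g m) * spectral_part p n S h (vadd p m (vsmul p s d))
        * spectral_part p n S h (vadd p m (vsmul p t d)) * char_sum p n D d
      = of_real (g m) * ((\<Sum>a\<in>S. \<Sum>b\<in>S. ?Y m a b * cnj (chi p n (?c a b) d)) / ?N\<^sup>2) * char_sum p n D d"
    for m d
    by (simp only: mult.assoc[of "of_real (g m)"] spectral_part_shifts_mult)
  also have "\<dots> m d = (\<Sum>a\<in>S. \<Sum>b\<in>S. ?w m * ?Y m a b * (cnj (chi p n (?c a b) d) * char_sum p n D d))"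
    for m d
    by (simp add: sum_distrib_left sum_distrib_right sum_divide_distrib mult_ac)
  finally have "twisted_ap_count p n D s t g (spectral_part p n S h) (spectral_part p n S h)
      = (\<Sum>m\<in>Fv p n. \<Sum>d\<in>Fv p n. \<Sum>a\<in>S. \<Sum>b\<in>S. ?w m * ?Y m a b * (cnj (chi p n (?c a b) d) * char_sum p n D d))"
    unfolding twisted_ap_count_def by (intro sum.cong refl)
  also have "\<dots> = (\<Sum>m\<in>Fv p n. \<Sum>a\<in>S. \<Sum>b\<in>S. ?w m * ?Y m a b * (\<Sum>d\<in>Fv p n. cnj (chi p n (?c a b) d) * char_sum p n D d))"
  proof (rule sum.cong[OF refl])
    fix m
    have "(\<Sum>d\<in>Fv p n. \<Sum>a\<in>S. \<Sum>b\<in>S. ?w m * ?Y m a b * (cnj (chi p n (?c a b) d) * char_sum p n D d))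
      = (\<Sum>a\<in>S. \<Sum>b\<in>S. \<Sum>d\<in>Fv p n. ?w m * ?Y m a b * (cnj (chi p n (?c a b) d) * char_sum p n D d))"
      by (rule sum_swap_innermost)
    also have "\<dots> = (\<Sum>a\<in>S. \<Sum>b\<in>S. ?w m * ?Y m a b * (\<Sum>d\<in>Fv p n. cnj (chi p n (?c a b) d) * char_sum p n D d))"
      by (simp only: sum_distrib_left)
    finally show "(\<Sum>d\<in>Fv p n. \<Sum>a\<in>S. \<Sum>b\<in>S. ?w m * ?Y m a b * (cnj (chi p n (?c a b) d) * char_sum p n D d))
      = (\<Sum>a\<in>S. \<Sum>b\<in>S. ?w m * ?Y m a b * (\<Sum>d\<in>Fv p n. cnj (chi p n (?c a b) d) * char_sum p n D d))" .
  qed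
  \<comment> \<open>by orthogonality, \<open>char_sum p n D\<close> detects the frequency \<open>s a + t b\<close> of every pair \<open>a, b \<in> S\<close>\<close>
  also have "\<dots> = (\<Sum>m\<in>Fv p n. \<Sum>a\<in>S. \<Sum>b\<in>S. ?w m * ?Y m a b * ?N)"
    using assms by (simp add: sum_cnj_chi_mult_char_sum)
  also have "\<dots> = (\<Sum>m\<in>Fv p n. ?N * (of_real (g m) * ((\<Sum>a\<in>S. \<Sum>b\<in>S. ?Y m a b) / ?N\<^sup>2)))"
    by (intro sum.cong refl) (simp add: sum_distrib_left sum_divide_distrib mult_ac)
  also have "\<dots> = ?N * (\<Sum>m\<in>Fv p n. of_real (g m) * (spectral_part p n S h m)\<^sup>2)"
    by (simp add: spectral_part_def power2_eq_square sum_product sum_distrib_left mult_ac)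
  finally show ?thesis .
qed

lemma L2_set_vadd_vsmul:
  assumes "s' * s mod p = 1" "m \<in> Fv p n"
  shows "L2_set (\<lambda>d. f (vadd p m (vsmul p s d))) (Fv p n) = L2_set f (Fv p n)"
  unfolding L2_set_def using sum_vadd_vsmul[OF assms, of "\<lambda>y. (f y)\<^sup>2"] by simp

lemma norm_twisted_ap_count_le:
  fixes g :: "(nat \<Rightarrow> nat) \<Rightarrow> real"
  assumes s: "s' * s mod p = 1" and t: "t' * t mod p = 1" and g: "\<forall>m\<in>Fv p n. 0 \<le> g m"
  shows "cmod (twisted_ap_count p n D s t g h1 h2)
    \<le> card D * (\<Sum>m\<in>Fv p n. g m) * L2_set (\<lambda>x. cmod (h1 x)) (Fv p n) * L2_set (\<lambda>x. cmod (h2 x)) (Fv p n)"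
proof -
  let ?x1 = "\<lambda>m d. vadd p m (vsmul p s d)" and ?x2 = "\<lambda>m d. vadd p m (vsmul p t d)"
  have "cmod (twisted_ap_count p n D s t g h1 h2)
      \<le> (\<Sum>m\<in>Fv p n. \<Sum>d\<in>Fv p n. cmod (of_real (g m) * h1 (?x1 m d) * h2 (?x2 m d) * char_sum p n D d))"
    unfolding twisted_ap_count_def by (rule order_trans[OF norm_sum sum_mono[OF norm_sum]])
  also have "\<dots> \<le> (\<Sum>m\<in>Fv p n. \<Sum>d\<in>Fv p n. card D * g m * (\<bar>cmod (h1 (?x1 m d))\<bar> * \<bar>cmod (h2 (?x2 m d))\<bar>))"
  proof (intro sum_mono)
    fix m d assume "m \<in> Fv p n"
    then have "0 \<le> g m * (cmod (h1 (?x1 m d)) * cmod (h2 (?x2 m d)))"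
      using g by simp
    then have "g m * (cmod (h1 (?x1 m d)) * cmod (h2 (?x2 m d))) * cmod (char_sum p n D d)
        \<le> g m * (cmod (h1 (?x1 m d)) * cmod (h2 (?x2 m d))) * card D"
      by (rule mult_left_mono[OF norm_char_sum_le])
    with g \<open>m \<in> Fv p n\<close>
    show "cmod (of_real (g m) * h1 (?x1 m d) * h2 (?x2 m d) * char_sum p n D d)
        \<le> card D * g m * (\<bar>cmod (h1 (?x1 m d))\<bar> * \<bar>cmod (h2 (?x2 m d))\<bar>)"
      by (simp add: norm_mult mult_ac)
  qed
  also have "\<dots> = (\<Sum>m\<in>Fv p n. card D * g m * (\<Sum>d\<in>Fv p n. \<bar>cmod (h1 (?x1 m d))\<bar> * \<bar>cmod (h2 (?x2 m d))\<bar>))"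
    by (simp add: sum_distrib_left)
  also have "\<dots> \<le> (\<Sum>m\<in>Fv p n. card D * g m * (L2_set (\<lambda>d. cmod (h1 (?x1 m d))) (Fv p n) * L2_set (\<lambda>d. cmod (h2 (?x2 m d))) (Fv p n)))"
    using g by (intro sum_mono mult_left_mono L2_set_mult_ineq) auto
  also have "\<dots> = card D * (\<Sum>m\<in>Fv p n. g m) * L2_set (\<lambda>x. cmod (h1 x)) (Fv p n) * L2_set (\<lambda>x. cmod (h2 x)) (Fv p n)"
    using L2_set_vadd_vsmul[OF s, where f = "\<lambda>x. cmod (h1 x)"] L2_set_vadd_vsmul[OF t, where f = "\<lambda>x. cmod (h2 x)"]
    by (simp add: sum_distrib_left sum_distrib_right mult_ac cong: sum.cong)
  finally show ?thesis .
qed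

lemma Re_twisted_ap_count_le:
  fixes f g :: "(nat \<Rightarrow> nat) \<Rightarrow> real"
  assumes "\<forall>m\<in>Fv p n. 0 \<le> g m" "\<forall>m\<in>Fv p n. 0 \<le> f m"
  shows "Re (twisted_ap_count p n D s t g (\<lambda>x. of_real (f x)) (\<lambda>x. of_real (f x))) \<le> card D * ap_count p n s t g f f"
proof -
  have "(g m * f (vadd p m (vsmul p s d)) * f (vadd p m (vsmul p t d))) * Re (char_sum p n D d)
     \<le> (g m * f (vadd p m (vsmul p s d)) * f (vadd p m (vsmul p t d))) * card D"
    if "m \<in> Fv p n" "d \<in> Fv p n" for m d
    using assms that by (intro mult_left_mono order_trans[OF complex_Re_le_cmod norm_char_sum_le]) auto
  then show ?thesis
    unfolding twisted_ap_count_def ap_count_def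
    by (simp add: Re_sum sum_distrib_left sum_mono mult_ac)
qed

lemma ap_count_ge_spectral:
  fixes f g :: "(nat \<Rightarrow> nat) \<Rightarrow> real"
  assumes f: "\<forall>m\<in>Fv p n. 0 \<le> f m \<and> f m \<le> 1" and g: "\<forall>m\<in>Fv p n. 0 \<le> g m \<and> g m \<le> 1"
    and ST: "S \<union> T = Fv p n" "S \<inter> T = {}"
    and s: "s' * s mod p = 1" and t: "t' * t mod p = 1"
    and D: "D \<subseteq> Fv p n" and sumset: "\<And>a b. a \<in> S \<Longrightarrow> b \<in> S \<Longrightarrow> vadd p (vsmul p s a) (vsmul p t b) \<in> D"
  defines "fT \<equiv> spectral_part p n T (\<lambda>x. of_real (f x))"
  defines "u \<equiv> L2_set (\<lambda>x. cmod (fT x)) (Fv p n)"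
  shows "real (p ^ n) * ((\<Sum>m\<in>Fv p n. g m * (f m)\<^sup>2) - 2 * (\<Sum>m\<in>Fv p n. g m * cmod (fT m)) - u\<^sup>2)
      - card D * (\<Sum>m\<in>Fv p n. g m) * (2 * u * L2_set f (Fv p n) + u\<^sup>2)
    \<le> card D * ap_count p n s t g f f"
proof -
  define fc where "fc = (\<lambda>x. complex_of_real (f x))"
  define fS where "fS = spectral_part p n S fc"
  define Z where "Z = twisted_ap_count p n D s t g"
  let ?v = "L2_set f (Fv p n)" and ?G = "\<Sum>m\<in>Fv p n. g m"
  have g0: "\<forall>m\<in>Fv p n. 0 \<le> g m"
    using g by simp
  have v: "L2_set (\<lambda>x. cmod (fc x)) (Fv p n) = ?v"
    by (simp add: fc_def L2_set_def)
  have u2: "u\<^sup>2 = (\<Sum>m\<in>Fv p n. (cmod (fT m))\<^sup>2)"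
    unfolding u_def L2_set_def by (simp add: sum_nonneg)
  have fS: "fS x = fc x - fT x" if "x \<in> Fv p n" for x
    using spectral_part_partition[OF ST that, of fc] unfolding fS_def fT_def fc_def by simp
  have "Z fS fS = Z (\<lambda>x. fc x - fT x) (\<lambda>x. fc x - fT x)"
    unfolding Z_def twisted_ap_count_def by (intro sum.cong refl) (simp add: fS)
  then have decomp: "Z fc fc = Z fS fS + Z fT fc + Z fc fT - Z fT fT"
    by (simp add: Z_def twisted_ap_count_diff)
  have "Z fS fS = of_nat (p ^ n) * (\<Sum>m\<in>Fv p n. of_real (g m) * (fS m)\<^sup>2)"
    unfolding Z_def fS_def using twisted_ap_count_spectral_part[OF D sumset] by simp
  with decomp have Re_decomp: "Re (Z fc fc)
      = real (p ^ n) * Re (\<Sum>m\<in>Fv p n. of_real (g m) * (fS m)\<^sup>2) + Re (Z fT fc) + Re (Z fc fT) - Re (Z fT fT)"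
    by simp
  have "(\<Sum>m\<in>Fv p n. of_real (g m) * (fS m)\<^sup>2) = (\<Sum>m\<in>Fv p n. of_real (g m) * (of_real (f m) - fT m)\<^sup>2)"
    by (simp add: fS fc_def)
  then have "(\<Sum>m\<in>Fv p n. g m * (f m)\<^sup>2) - 2 * (\<Sum>m\<in>Fv p n. g m * cmod (fT m)) - u\<^sup>2
      \<le> Re (\<Sum>m\<in>Fv p n. of_real (g m) * (fS m)\<^sup>2)"
    using sum_Re_square_diff_ge[OF f g, of fT] by (simp add: u2)
  then have main: "real (p ^ n) * ((\<Sum>m\<in>Fv p n. g m * (f m)\<^sup>2) - 2 * (\<Sum>m\<in>Fv p n. g m * cmod (fT m)) - u\<^sup>2)
      \<le> real (p ^ n) * Re (\<Sum>m\<in>Fv p n. of_real (g m) * (fS m)\<^sup>2)"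
    by (rule mult_left_mono) simp
  have "cmod (Z fT fc) \<le> card D * ?G * u * ?v" "cmod (Z fc fT) \<le> card D * ?G * ?v * u"
    "cmod (Z fT fT) \<le> card D * ?G * u * u"
    using norm_twisted_ap_count_le[OF s t g0, of D fT fc] norm_twisted_ap_count_le[OF s t g0, of D fc fT]
      norm_twisted_ap_count_le[OF s t g0, of D fT fT]
    unfolding Z_def u_def v by simp_all
  moreover have "Re (Z fc fc) \<le> card D * ap_count p n s t g f f"
    unfolding Z_def fc_def using f g by (intro Re_twisted_ap_count_le) auto
  moreover have "card D * ?G * (2 * u * ?v + u\<^sup>2) = card D * ?G * u * ?v + card D * ?G * ?v * u + card D * ?G * u * u"
    by (simp add: power2_eq_square algebra_simps)
  ultimately show ?thesis
    using Re_decomp main abs_Re_le_cmod[of "Z fT fc"] abs_Re_le_cmod[of "Z fc fT"] abs_Re_le_cmod[of "Z fT fT"]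
    by linarith
qed

end

section \<open>Lower bounds for progression counts\<close>

lemma sum_cubed_le_sum_of_cubes:
  fixes f :: "'a \<Rightarrow> real"
  assumes "\<And>i. i \<in> I \<Longrightarrow> 0 \<le> f i"
  shows "(\<Sum>i\<in>I. f i) ^ 3 \<le> (\<Sum>i\<in>I. (f i) ^ 3) * (card I)\<^sup>2"
proof (cases "finite I \<and> I \<noteq> {}")
  case True
  then have "(\<Sum>i\<in>I. f i / card I) ^ 3 \<le> (\<Sum>i\<in>I. (f i) ^ 3 / card I)"
    using convex_on_sum[OF _ _ convex_power_odd[of 3], where a = "\<lambda>_. 1 / card I" and S = I] assms
    by simp
  then have "(\<Sum>i\<in>I. f i) ^ 3 / (card I) ^ 3 \<le> (\<Sum>i\<in>I. (f i) ^ 3) / card I"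
    by (simp add: power_divide flip: sum_divide_distrib)
  moreover have "0 < real (card I)"
    using True by (simp add: card_gt_0_iff)
  ultimately show ?thesis
    by (simp add: field_simps power2_eq_square power3_eq_cube)
qed auto

lemma power4_le_cube:
  fixes \<beta> G :: real
  assumes "0 \<le> \<beta>" "\<beta> \<le> G" "G \<le> 1"
  shows "\<beta> ^ 4 \<le> G ^ 3"
  by (rule order_trans[OF power_mono[OF assms(2,1)] power_decreasing]) (use assms in auto)

lemma choose_two_bounds:
  assumes "2 \<le> k"
  shows "1 \<le> real (k choose 2)" "real k \<le> 2 * real (k choose 2)" "(real k)\<^sup>2 \<le> 4 * real (k choose 2)"
proof -
  have "2 * (k choose 2) = k * (k - 1)"
    using assms choose_two[of k] by (cases k) simp_all
  then have "2 * real (k choose 2) = real (k * (k - 1))"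
    by (metis of_nat_mult of_nat_numeral)
  also have "\<dots> = real k * real k - real k"
    using assms by (simp add: of_nat_diff algebra_simps)
  finally have "2 * real (k choose 2) = real k * real k - real k" .
  moreover have "2 * real k \<le> real k * real k"
    using assms by (intro mult_right_mono) auto
  ultimately show "1 \<le> real (k choose 2)" "real k \<le> 2 * real (k choose 2)" "(real k)\<^sup>2 \<le> 4 * real (k choose 2)"
    using assms unfolding power2_eq_square by linarith+
qed

lemma cube_lower_bound_arith:
  fixes w G \<delta> c C Dc :: real
  assumes "1 \<le> Dc" "Dc \<le> 4 * C" "0 < G" "0 \<le> \<delta>" "\<delta> \<le> c * G\<^sup>2" "8 * c \<le> G" "512 * c * C \<le> 1"
    and "G ^ 3 - 3 * \<delta> - 3 * Dc * G * \<delta> \<le> Dc * w"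
  shows "c * G ^ 3 \<le> w"
proof -
  have "0 \<le> c * G\<^sup>2"
    using assms(4,5) by linarith
  then have "0 \<le> c"
    using assms(3) by (simp add: zero_le_mult_iff)
  have "\<delta> \<le> G ^ 3 / 8"
    using assms(5) mult_right_mono[OF assms(6), of "G\<^sup>2"] by (simp add: power2_eq_square power3_eq_cube)
  moreover have "G * \<delta> \<le> c * G ^ 3"
    using mult_left_mono[OF assms(5), of G] assms(3) by (simp add: power2_eq_square power3_eq_cube mult_ac)
  then have "3 * Dc * G * \<delta> \<le> 3 * (Dc * c * G ^ 3)"
    using assms(1) mult_left_mono[of "G * \<delta>" "c * G ^ 3" "3 * Dc"] by (simp add: mult_ac)
  moreover have "80 * (Dc * c) \<le> 5 / 8"
    using mult_left_mono[OF assms(2) \<open>0 \<le> c\<close>] assms(7) by (simp add: mult_ac)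
  then have "80 * (Dc * c * G ^ 3) \<le> 5 / 8 * G ^ 3"
    using assms(3) mult_right_mono[of "80 * (Dc * c)" "5 / 8" "G ^ 3"] by (simp add: mult_ac)
  moreover have "0 \<le> Dc * c * G ^ 3"
    using assms(1,3) \<open>0 \<le> c\<close> by simp
  ultimately have "Dc * (c * G ^ 3) \<le> Dc * w"
    using assms(8) by (simp only: mult.assoc[symmetric])
  then show ?thesis
    using assms(1) by simp
qed

lemma cube_lower_bound_of_density:
  fixes w G \<delta> Dc :: real and p k :: nat
  defines "c \<equiv> 1 / (128 * (real p)\<^sup>2 * real (k choose 2))"
  assumes p: "2 \<le> p" and k: "2 \<le> k" and Dc: "1 \<le> Dc" "Dc \<le> (real k)\<^sup>2" and G: "0 < G" "G \<le> 1"
    and dense: "1 / (real p * real k) \<le> G" and \<delta>: "0 \<le> \<delta>" "\<delta> \<le> c * G\<^sup>2"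
    and cube: "\<delta> \<le> 1 \<Longrightarrow> G ^ 3 - 3 * \<delta> - 3 * Dc * G * \<delta> \<le> Dc * w"
  shows "c * G ^ 3 \<le> w"
proof -
  define C where "C = real (k choose 2)"
  note C = choose_two_bounds[OF k, folded C_def]
  have p2: "4 \<le> (real p)\<^sup>2"
    using power_mono[of 2 "real p" 2] p by simp
  have "0 < (real p)\<^sup>2 * C"
    using C p by (intro mult_pos_pos) auto
  then have "0 < c"
    by (simp add: c_def C_def mult_ac)
  have "512 * c * C \<le> 1"
    using C p2 by (simp add: c_def C_def divide_le_eq)
  have "c * G\<^sup>2 \<le> 1"
  proof (intro mult_le_one)
    show "c \<le> 1"
      using \<open>512 * c * C \<le> 1\<close> C \<open>0 < c\<close> mult_left_mono[of 1 C "512 * c"] by linarith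
  qed (use \<open>0 < c\<close> G in \<open>auto simp: power_le_one\<close>)
  have "8 * c \<le> G"
  proof -
    have "2 * C \<le> 16 * real p * C"
      using p C(1) by (intro mult_right_mono) auto
    then have "real k \<le> 16 * real p * C"
      using C(2) by linarith
    then have "real p * real k \<le> real p * (16 * real p * C)"
      by (rule mult_left_mono) simp
    then have "real p * real k \<le> 16 * (real p)\<^sup>2 * C"
      by (simp add: power2_eq_square mult_ac)
    then have "1 / (16 * (real p)\<^sup>2 * C) \<le> 1 / (real p * real k)"
      using p k C by (intro divide_left_mono) auto
    moreover have "8 * c = 1 / (16 * (real p)\<^sup>2 * C)"
      by (simp add: c_def C_def)
    ultimately show ?thesis
      using dense by linarith
  qed
  have "\<delta> \<le> 1"
    using \<delta> \<open>c * G\<^sup>2 \<le> 1\<close> by linarith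
  show ?thesis
    using Dc C(3) G(1) \<delta> \<open>8 * c \<le> G\<close> \<open>512 * c * C \<le> 1\<close> cube[OF \<open>\<delta> \<le> 1\<close>]
    by (intro cube_lower_bound_arith[where C = C]) auto
qed

lemma three_ap_bound_of_density:
  fixes w G \<beta> \<delta> Dc :: real and p k :: nat
  assumes "2 \<le> p" "2 \<le> k" "1 \<le> Dc" "Dc \<le> (real k)\<^sup>2" "0 < \<beta>" "\<beta> \<le> G" "G \<le> 1"
    and "1 / (real p * real k) \<le> G" "0 \<le> \<delta>" "0 \<le> w"
    and "\<delta> \<le> 1 \<Longrightarrow> G ^ 3 - 3 * \<delta> - 3 * Dc * G * \<delta> \<le> Dc * w"
  shows "1 / (real p)\<^sup>2 * (1 / real (k choose 2)) * \<beta> ^ 4 / 128 - 9 * \<delta> * \<beta>\<^sup>2 / 8 \<le> w"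
proof -
  define c where "c = 1 / (128 * (real p)\<^sup>2 * real (k choose 2))"
  have "0 < (real p)\<^sup>2 * real (k choose 2)"
    using assms(1,2) by (intro mult_pos_pos) auto
  then have "0 < c"
    by (simp add: c_def mult_ac)
  have rhs: "1 / (real p)\<^sup>2 * (1 / real (k choose 2)) * \<beta> ^ 4 / 128 = c * \<beta> ^ 4"
    by (simp add: c_def)
  show ?thesis
  proof (cases "8 / 9 * c * \<beta>\<^sup>2 \<le> \<delta>")
    case True
    then have "c * \<beta> ^ 4 \<le> 9 * \<delta> * \<beta>\<^sup>2 / 8"
      using mult_right_mono[OF True, of "\<beta>\<^sup>2"] by (simp add: power2_eq_square power4_eq_xxxx)
    then show ?thesis
      using \<open>0 \<le> w\<close> unfolding rhs by linarith
  next
    case False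
    have "c * \<beta>\<^sup>2 \<le> c * G\<^sup>2"
      using \<open>0 < c\<close> assms(5,6) by (simp add: power_mono)
    moreover have "\<delta> < 8 / 9 * (c * \<beta>\<^sup>2)" "0 \<le> c * \<beta>\<^sup>2"
      using False \<open>0 < c\<close> by (simp_all add: not_le mult.assoc)
    ultimately have "\<delta> \<le> c * G\<^sup>2"
      by linarith
    moreover have "0 < G"
      using assms(5,6) by simp
    ultimately have "c * G ^ 3 \<le> w"
      using assms unfolding c_def by (intro cube_lower_bound_of_density) auto
    moreover have "c * \<beta> ^ 4 \<le> c * G ^ 3"
      using \<open>0 < c\<close> assms(5-7) by (simp add: power4_le_cube)
    moreover have "0 \<le> 9 * \<delta> * \<beta>\<^sup>2 / 8"
      using assms(9) by simp
    ultimately show ?thesis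
      unfolding rhs by linarith
  qed
qed

context mod_vectors
begin

lemma Ex_le_one:
  fixes g :: "(nat \<Rightarrow> nat) \<Rightarrow> real"
  assumes "\<forall>m\<in>Fv p n. g m \<le> 1"
  shows "Ex p n g \<le> 1"
  using assms one_less_p sum_mono[of "Fv p n" g "\<lambda>_. 1"] by (simp add: Ex_def divide_le_eq)

lemma L2_set_spectral_part_le:
  assumes "T \<subseteq> Fv p n" "(\<Sum>a\<in>T. (cmod (fhat p n h a))\<^sup>2) \<le> \<delta>\<^sup>2 * (real (p ^ n))\<^sup>2" "0 \<le> \<delta>"
  shows "L2_set (\<lambda>x. cmod (spectral_part p n T h x)) (Fv p n) \<le> \<delta> * sqrt (real (p ^ n))"
proof -
  have "(\<Sum>m\<in>Fv p n. (cmod (spectral_part p n T h m))\<^sup>2) = (\<Sum>a\<in>T. (cmod (fhat p n h a))\<^sup>2) / real (p ^ n)"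
    by (rule parseval_spectral_part[OF assms(1)])
  also have "\<dots> \<le> \<delta>\<^sup>2 * (real (p ^ n))\<^sup>2 / real (p ^ n)"
    using assms(2) by (rule divide_right_mono) simp
  also have "\<dots> = \<delta>\<^sup>2 * real (p ^ n)"
    by (simp add: power2_eq_square)
  finally have "(\<Sum>m\<in>Fv p n. (cmod (spectral_part p n T h m))\<^sup>2) \<le> \<delta>\<^sup>2 * real (p ^ n)" .
  then have "L2_set (\<lambda>x. cmod (spectral_part p n T h x)) (Fv p n) \<le> sqrt (\<delta>\<^sup>2 * real (p ^ n))"
    unfolding L2_set_def by (rule real_sqrt_le_mono)
  then show ?thesis
    using assms(3) by (simp add: real_sqrt_mult)
qed

lemma L2_set_le_sqrt_card:
  assumes "\<forall>x\<in>Fv p n. \<bar>f x\<bar> \<le> 1"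
  shows "L2_set f (Fv p n) \<le> sqrt (real (p ^ n))"
proof -
  have "(\<Sum>x\<in>Fv p n. (f x)\<^sup>2) \<le> (\<Sum>x\<in>Fv p n. 1)"
    using assms by (intro sum_mono) (simp add: abs_square_le_1)
  then show ?thesis
    unfolding L2_set_def by (simp add: real_sqrt_le_mono)
qed

lemma weighted_sum_le_sqrt_card_mult_L2_set:
  fixes f g :: "(nat \<Rightarrow> nat) \<Rightarrow> real"
  assumes "\<forall>x\<in>Fv p n. 0 \<le> g x \<and> g x \<le> 1"
  shows "(\<Sum>x\<in>Fv p n. g x * \<bar>f x\<bar>) \<le> sqrt (real (p ^ n)) * L2_set f (Fv p n)"
proof -
  have "(\<Sum>x\<in>Fv p n. g x * \<bar>f x\<bar>) \<le> (\<Sum>x\<in>Fv p n. \<bar>1\<bar> * \<bar>f x\<bar>)"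
    using assms by (intro sum_mono) (simp add: mult_left_le_one_le)
  also have "\<dots> \<le> sqrt (real (p ^ n)) * L2_set f (Fv p n)"
    using L2_set_mult_ineq[of "\<lambda>_. 1" f "Fv p n"] by (simp add: L2_set_def)
  finally show ?thesis .
qed

lemma card_mult_Ex_cube_le:
  fixes f g :: "(nat \<Rightarrow> nat) \<Rightarrow> real"
  assumes "\<forall>m\<in>Fv p n. 0 \<le> g m \<and> g m \<le> f m"
  shows "real (p ^ n) * (Ex p n g) ^ 3 \<le> (\<Sum>m\<in>Fv p n. g m * (f m)\<^sup>2)"
proof -
  have N: "0 < real (p ^ n)"
    using one_less_p by simp
  have "real (p ^ n) * (Ex p n g) ^ 3 = (\<Sum>m\<in>Fv p n. g m) ^ 3 / (real (p ^ n))\<^sup>2"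
    using N by (simp add: Ex_def power2_eq_square power3_eq_cube)
  also have "\<dots> \<le> (\<Sum>m\<in>Fv p n. (g m) ^ 3)"
    using sum_cubed_le_sum_of_cubes[of "Fv p n" g] assms N by (simp add: divide_le_eq)
  also have "\<dots> \<le> (\<Sum>m\<in>Fv p n. g m * (f m)\<^sup>2)"
  proof (intro sum_mono)
    fix m assume "m \<in> Fv p n"
    then have "g m * (g m)\<^sup>2 \<le> g m * (f m)\<^sup>2"
      using assms by (intro mult_left_mono power_mono) auto
    then show "(g m) ^ 3 \<le> g m * (f m)\<^sup>2"
      by (simp add: power2_eq_square power3_eq_cube)
  qed
  finally show ?thesis .
qed

lemma ap_count_ge_density:
  fixes f g :: "(nat \<Rightarrow> nat) \<Rightarrow> real"
  assumes f: "\<forall>m\<in>Fv p n. 0 \<le> f m \<and> f m \<le> 1" and g: "\<forall>m\<in>Fv p n. 0 \<le> g m \<and> g m \<le> 1"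
    and gf: "\<forall>m\<in>Fv p n. g m \<le> f m"
    and ST: "S \<union> T = Fv p n" "S \<inter> T = {}"
    and s: "s' * s mod p = 1" and t: "t' * t mod p = 1"
    and D: "D \<subseteq> Fv p n" and sumset: "\<And>a b. a \<in> S \<Longrightarrow> b \<in> S \<Longrightarrow> vadd p (vsmul p s a) (vsmul p t b) \<in> D"
    and T_small: "(\<Sum>a\<in>T. (cmod (fhat p n (\<lambda>x. of_real (f x)) a))\<^sup>2) \<le> \<delta>\<^sup>2 * (real (p ^ n))\<^sup>2"
    and "0 \<le> \<delta>" "\<delta> \<le> 1"
  shows "(Ex p n g) ^ 3 - 3 * \<delta> - 3 * real (card D) * Ex p n g * \<delta>
    \<le> real (card D) * (ap_count p n s t g f f / (real (p ^ n))\<^sup>2)"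
proof -
  define N where "N = real (p ^ n)"
  define G where "G = Ex p n g"
  define fT where "fT = spectral_part p n T (\<lambda>x. of_real (f x))"
  define u where "u = L2_set (\<lambda>x. cmod (fT x)) (Fv p n)"
  let ?v = "L2_set f (Fv p n)"
  have N: "0 < N"
    using one_less_p by (simp add: N_def)
  have sum_g: "(\<Sum>m\<in>Fv p n. g m) = N * G"
    using N by (simp add: G_def N_def Ex_def)
  have "0 \<le> G"
    using g N by (simp add: G_def Ex_def N_def sum_nonneg)
  have u: "u \<le> \<delta> * sqrt N" and "0 \<le> u"
    using L2_set_spectral_part_le[OF _ T_small \<open>0 \<le> \<delta>\<close>] ST by (auto simp: u_def fT_def N_def)
  have v: "?v \<le> sqrt N" and "0 \<le> ?v"
    using L2_set_le_sqrt_card[of f] f by (auto simp: N_def)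
  have "(\<Sum>m\<in>Fv p n. g m * cmod (fT m)) \<le> sqrt N * u"
    using weighted_sum_le_sqrt_card_mult_L2_set[OF g, of "\<lambda>x. cmod (fT x)"] by (simp add: u_def N_def)
  also have "\<dots> \<le> \<delta> * N"
    using mult_left_mono[OF u, of "sqrt N"] N by (simp add: mult_ac)
  finally have Y: "(\<Sum>m\<in>Fv p n. g m * cmod (fT m)) \<le> \<delta> * N" .
  have X: "N * G ^ 3 \<le> (\<Sum>m\<in>Fv p n. g m * (f m)\<^sup>2)"
    using card_mult_Ex_cube_le[of g f] g gf by (simp add: N_def G_def)
  have "u\<^sup>2 \<le> (\<delta> * sqrt N)\<^sup>2"
    using power_mono[OF u \<open>0 \<le> u\<close>] .
  also have "\<dots> = \<delta> * \<delta> * N"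
    using N by (simp add: power_mult_distrib power2_eq_square)
  also have "\<dots> \<le> \<delta> * N"
    using \<open>0 \<le> \<delta>\<close> \<open>\<delta> \<le> 1\<close> N by (intro mult_right_mono mult_left_le_one_le) auto
  finally have u2: "u\<^sup>2 \<le> \<delta> * N" .
  have uv: "u * ?v \<le> \<delta> * N"
    using mult_mono[OF u v] \<open>0 \<le> \<delta>\<close> \<open>0 \<le> ?v\<close> N by (simp add: mult.assoc)
  have "N * ((\<Sum>m\<in>Fv p n. g m * (f m)\<^sup>2) - 2 * (\<Sum>m\<in>Fv p n. g m * cmod (fT m)) - u\<^sup>2)
      - card D * (\<Sum>m\<in>Fv p n. g m) * (2 * u * ?v + u\<^sup>2) \<le> card D * ap_count p n s t g f f"
    using ap_count_ge_spectral[OF f g ST s t D sumset] unfolding fT_def u_def N_def by simp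
  moreover have "N * (N * G ^ 3 - 3 * (\<delta> * N))
      \<le> N * ((\<Sum>m\<in>Fv p n. g m * (f m)\<^sup>2) - 2 * (\<Sum>m\<in>Fv p n. g m * cmod (fT m)) - u\<^sup>2)"
    using X Y u2 N by (intro mult_left_mono) auto
  moreover have "card D * (\<Sum>m\<in>Fv p n. g m) * (2 * u * ?v + u\<^sup>2) \<le> card D * (N * G) * (3 * (\<delta> * N))"
    unfolding sum_g using uv u2 N \<open>0 \<le> G\<close> by (intro mult_left_mono) auto
  ultimately have "N\<^sup>2 * (G ^ 3 - 3 * \<delta> - 3 * real (card D) * G * \<delta>) \<le> card D * ap_count p n s t g f f"
    by (simp add: power2_eq_square algebra_simps)
  then have "G ^ 3 - 3 * \<delta> - 3 * real (card D) * G * \<delta> \<le> card D * (ap_count p n s t g f f / N\<^sup>2)"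
    using N by (simp add: pos_le_divide_eq mult.commute)
  then show ?thesis
    by (simp add: G_def N_def)
qed

lemma ap_count_lower_bound:
  fixes f g :: "(nat \<Rightarrow> nat) \<Rightarrow> real" and \<beta> \<delta> :: real
  assumes f: "\<forall>m\<in>Fv p n. 0 \<le> f m \<and> f m \<le> 1" and g: "\<forall>m\<in>Fv p n. 0 \<le> g m \<and> g m \<le> 1"
    and gf: "\<forall>m\<in>Fv p n. g m \<le> f m"
    and ST: "S \<union> T = Fv p n" "S \<inter> T = {}" and "S \<noteq> {}" "card S \<le> k" "2 \<le> k"
    and T_small: "(\<Sum>a\<in>T. (cmod (fhat p n (\<lambda>x. of_real (f x)) a))\<^sup>2) \<le> \<delta>\<^sup>2 * (real (p ^ n))\<^sup>2"
    and "0 \<le> \<delta>" "0 < \<beta>" and beta: "\<beta> \<le> Ex p n g" and dense: "1 / (real p * real k) \<le> Ex p n g"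
    and s: "s' * s mod p = 1" and t: "t' * t mod p = 1"
  shows "1 / (real p)\<^sup>2 * (1 / real (k choose 2)) * \<beta> ^ 4 / 128 - 9 * \<delta> * \<beta>\<^sup>2 / 8
    \<le> ap_count p n s t g f f / (real (p ^ n))\<^sup>2"
proof -
  define D where "D = (\<lambda>(a, b). vadd p (vsmul p s a) (vsmul p t b)) ` (S \<times> S)"
  have "S \<subseteq> Fv p n"
    using ST by blast
  then have "finite S"
    by (rule finite_subset) simp
  have "D \<subseteq> Fv p n"
    using \<open>S \<subseteq> Fv p n\<close> by (auto simp: D_def intro!: vadd_in_Fv vsmul_in_Fv)
  have "1 \<le> card D"
    using \<open>finite S\<close> \<open>S \<noteq> {}\<close> by (simp add: D_def Suc_le_eq card_gt_0_iff)
  have "card D \<le> card S * card S"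
    unfolding D_def using \<open>finite S\<close> card_image_le[of "S \<times> S"] by (simp add: card_cartesian_product)
  also have "\<dots> \<le> k * k"
    using \<open>card S \<le> k\<close> by (intro mult_mono) simp_all
  finally have "real (card D) \<le> (real k)\<^sup>2"
    by (simp add: power2_eq_square flip: of_nat_mult)
  have "0 \<le> ap_count p n s t g f f / (real (p ^ n))\<^sup>2"
    using f g one_less_p unfolding ap_count_def by (intro divide_nonneg_pos sum_nonneg mult_nonneg_nonneg) auto
  moreover have "Ex p n g \<le> 1"
    using g by (simp add: Ex_le_one)
  moreover have "(Ex p n g) ^ 3 - 3 * \<delta> - 3 * real (card D) * Ex p n g * \<delta>
      \<le> real (card D) * (ap_count p n s t g f f / (real (p ^ n))\<^sup>2)" if "\<delta> \<le> 1"
    by (rule ap_count_ge_density[OF f g gf ST s t \<open>D \<subseteq> Fv p n\<close> _ T_small \<open>0 \<le> \<delta>\<close> that])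
      (auto simp: D_def)
  ultimately show ?thesis
    using one_less_p assms(8) \<open>1 \<le> card D\<close> \<open>card D \<le> (real k)\<^sup>2\<close> assms(10-13)
    by (intro three_ap_bound_of_density) auto
qed

end

section \<open>Three-term progressions\<close>

lemma three_ap_bound_le_power4:
  fixes \<beta> \<delta> :: real
  assumes "1 \<le> p" "2 \<le> k" "0 \<le> \<delta>"
  shows "1 / (real p)\<^sup>2 * (1 / real (k choose 2)) * \<beta> ^ 4 / 128 - 9 * \<delta> * \<beta>\<^sup>2 / 8 \<le> \<beta> ^ 4"
proof -
  define a where "a = 1 / ((real p)\<^sup>2 * real (k choose 2) * 128)"
  have "1 \<le> real (k choose 2)"
    using assms(2) zero_less_binomial[of 2 k] by (simp add: Suc_le_eq)
  moreover have "1 \<le> (real p)\<^sup>2"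
    using assms(1) by (simp add: one_le_power)
  ultimately have "1 \<le> (real p)\<^sup>2 * real (k choose 2)"
    using mult_mono[of 1 "(real p)\<^sup>2" 1 "real (k choose 2)"] by simp
  then have "a * \<beta> ^ 4 \<le> \<beta> ^ 4"
    by (intro mult_left_le_one_le) (simp_all add: a_def zero_le_even_power)
  moreover have "1 / (real p)\<^sup>2 * (1 / real (k choose 2)) * \<beta> ^ 4 / 128 = a * \<beta> ^ 4"
    by (simp add: a_def)
  moreover have "0 \<le> 9 * \<delta> * \<beta>\<^sup>2 / 8"
    using assms(3) by simp
  ultimately show ?thesis
    by linarith
qed

context mod_vectors
begin

lemma mod_inverse_minus_one: "(p - 1) * (p - 1) mod p = 1"
proof -
  have "(p - 1) * (p - 1) = 1 + p * (p - 2)"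
    using one_less_p by (cases p; cases "p - 1") (auto simp: algebra_simps)
  then have "(p - 1) * (p - 1) mod p = 1 mod p"
    by (simp only: mod_mult_self2)
  then show ?thesis
    using one_less_p by simp
qed

lemma mod_inverse_two:
  assumes "odd p"
  shows "(p + 1) div 2 * 2 mod p = 1"
proof -
  have "(p + 1) div 2 * 2 = p + 1"
    using assms by (intro dvd_div_mult_self) simp
  then show ?thesis
    using one_less_p by (simp add: mod_Suc)
qed

lemma Lambda3_fgf_eq_ap_count:
  "Lambda3 p n f g f = ap_count p n (p - 1) 1 g f f / (real (p ^ n))\<^sup>2"
proof -
  have "(\<Sum>m\<in>Fv p n. f m * g (vadd p m d) * f (vadd p m (vadd p d d)))
      = (\<Sum>y\<in>Fv p n. g y * f (vadd p y (vsmul p (p - 1) d)) * f (vadd p y (vsmul p 1 d)))"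
    if "d \<in> Fv p n" for d
  proof -
    \<comment> \<open>substitute \<open>m = y - d\<close>\<close>
    have "(\<Sum>m\<in>Fv p n. f m * g (vadd p m d) * f (vadd p m (vadd p d d)))
        = (\<Sum>y\<in>Fv p n. f (vadd p y (vneg p d)) * g (vadd p (vadd p y (vneg p d)) d)
            * f (vadd p (vadd p y (vneg p d)) (vadd p d d)))"
      by (rule sum_vadd_right[OF vneg_in_Fv[OF that],
            of "\<lambda>m. f m * g (vadd p m d) * f (vadd p m (vadd p d d))", symmetric])
    also have "\<dots> = (\<Sum>y\<in>Fv p n. g y * f (vadd p y (vneg p d)) * f (vadd p y d))"
      using that by (intro sum.cong refl) (simp add: vadd_assoc[symmetric] mult.commute, simp add: vadd_assoc)
    finally show ?thesis
      using that one_less_p by (simp add: vneg_def vsmul_eq_self)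
  qed
  then show ?thesis
    unfolding Lambda3_def ap_count_def by (subst (1 2) sum.swap) simp
qed

lemma Lambda3_gff_eq_ap_count:
  "Lambda3 p n g f f = ap_count p n 1 2 g f f / (real (p ^ n))\<^sup>2"
  unfolding Lambda3_def ap_count_def using one_less_p
  by (simp add: vsmul_eq_self vsmul_2 cong: sum.cong)

lemma Lambda3_gff_ge_cube_char_two:
  fixes f g :: "(nat \<Rightarrow> nat) \<Rightarrow> real"
  assumes "p = 2" and f: "\<forall>m\<in>Fv p n. 0 \<le> f m" and g: "\<forall>m\<in>Fv p n. 0 \<le> g m"
    and gf: "\<forall>m\<in>Fv p n. g m \<le> f m"
  shows "(Ex p n g) ^ 3 \<le> Lambda3 p n g f f"
proof -
  define N where "N = real p ^ n"
  have N: "0 < N"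
    using one_less_p by (simp add: N_def)
  have "vadd p d d = vzero" for d
    using assms(1) by (simp add: vadd_def vzero_def fun_eq_iff)
  \<comment> \<open>in characteristic 2 the progression \<open>m, m + d, m + 2d\<close> degenerates to \<open>m, m + d, m\<close>\<close>
  then have "(\<Sum>m\<in>Fv p n. \<Sum>d\<in>Fv p n. g m * f (vadd p m d) * f (vadd p m (vadd p d d)))
      = (\<Sum>m\<in>Fv p n. g m * f m * (\<Sum>d\<in>Fv p n. f (vadd p d m)))"
    by (simp add: sum_distrib_left vadd_commute mult_ac)
  also have "\<dots> = (\<Sum>m\<in>Fv p n. g m * f m) * (\<Sum>d\<in>Fv p n. f d)"
    by (simp add: sum_vadd_right sum_distrib_right)
  finally have Lambda: "Lambda3 p n g f f = (\<Sum>m\<in>Fv p n. g m * f m) * (\<Sum>d\<in>Fv p n. f d) / N\<^sup>2"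
    by (simp add: Lambda3_def N_def)
  have "(\<Sum>m\<in>Fv p n. g m)\<^sup>2 \<le> (\<Sum>m\<in>Fv p n. (g m)\<^sup>2) * N"
    using sum_squared_le_sum_of_squares[of g "Fv p n"] by (simp add: N_def)
  also have "\<dots> \<le> (\<Sum>m\<in>Fv p n. g m * f m) * N"
    using g gf N by (intro mult_right_mono sum_mono) (auto simp: power2_eq_square mult_left_mono)
  finally have "(\<Sum>m\<in>Fv p n. g m)\<^sup>2 * (\<Sum>m\<in>Fv p n. g m) \<le> (\<Sum>m\<in>Fv p n. g m * f m) * N * (\<Sum>d\<in>Fv p n. f d)"
    using g gf f by (intro mult_mono sum_mono sum_nonneg mult_nonneg_nonneg) (auto intro: less_imp_le[OF N])
  then have "(\<Sum>m\<in>Fv p n. g m) ^ 3 / N ^ 3 \<le> (\<Sum>m\<in>Fv p n. g m * f m) * N * (\<Sum>d\<in>Fv p n. f d) / N ^ 3"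
    using N by (intro divide_right_mono) (simp_all add: power2_eq_square power3_eq_cube)
  then show ?thesis
    using N by (simp add: Lambda Ex_def N_def[symmetric] power_divide power2_eq_square power3_eq_cube)
qed

context
  fixes f g :: "(nat \<Rightarrow> nat) \<Rightarrow> real" and k :: nat and \<beta> \<delta> :: real
  assumes f: "\<forall>m\<in>Fv p n. 0 \<le> f m \<and> f m \<le> 1" and g: "\<forall>m\<in>Fv p n. 0 \<le> g m \<and> g m \<le> 1"
    and gf: "\<forall>m\<in>Fv p n. g m \<le> f m" and k: "2 \<le> k" "k \<le> p ^ n"
    and sigma: "sigma p n (\<lambda>x. of_real (f x)) k \<le> \<delta>\<^sup>2 * (real (p ^ n))\<^sup>2" and \<delta>: "0 \<le> \<delta>"
    and \<beta>: "0 < \<beta>" "\<beta> \<le> Ex p n g" and dense: "1 / (real p * real k) \<le> Ex p n g"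
begin

lemma ap_count_ge_three_ap_bound:
  assumes "s' * s mod p = 1" "t' * t mod p = 1"
  shows "1 / (real p)\<^sup>2 * (1 / real (k choose 2)) * \<beta> ^ 4 / 128 - 9 * \<delta> * \<beta>\<^sup>2 / 8
    \<le> ap_count p n s t g f f / (real (p ^ n))\<^sup>2"
proof -
  have "1 \<le> k"
    using k(1) by simp
  then obtain S T where ST: "S \<union> T = Fv p n" "S \<inter> T = {}" "S \<noteq> {}" "card S \<le> k"
    and T: "(\<Sum>a\<in>T. (cmod (fhat p n (\<lambda>x. of_real (f x)) a))\<^sup>2) = sigma p n (\<lambda>x. of_real (f x)) k"
    by (rule spectral_partition[OF _ k(2)])
  show ?thesis
    using sigma unfolding T[symmetric]
    by (rule ap_count_lower_bound[OF f g gf ST k(1) _ \<delta> \<beta> dense assms])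
qed

lemma Lambda3_fgf_ge:
  "1 / (real p)\<^sup>2 * (1 / real (k choose 2)) * \<beta> ^ 4 / 128 - 9 * \<delta> * \<beta>\<^sup>2 / 8 \<le> Lambda3 p n f g f"
  using ap_count_ge_three_ap_bound[where s = "p - 1" and s' = "p - 1" and t = 1 and t' = 1]
    mod_inverse_minus_one one_less_p
  by (simp add: Lambda3_fgf_eq_ap_count)

lemma Lambda3_gff_ge:
  assumes "prime p"
  shows "1 / (real p)\<^sup>2 * (1 / real (k choose 2)) * \<beta> ^ 4 / 128 - 9 * \<delta> * \<beta>\<^sup>2 / 8 \<le> Lambda3 p n g f f"
proof (cases "p = 2")
  case True
  have "1 / (real p)\<^sup>2 * (1 / real (k choose 2)) * \<beta> ^ 4 / 128 - 9 * \<delta> * \<beta>\<^sup>2 / 8 \<le> \<beta> ^ 4"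
    using one_less_p k \<delta> by (intro three_ap_bound_le_power4) auto
  also have "\<dots> \<le> (Ex p n g) ^ 3"
    using \<beta> Ex_le_one g by (simp add: power4_le_cube)
  also have "\<dots> \<le> Lambda3 p n g f f"
    using True f g gf by (intro Lambda3_gff_ge_cube_char_two) auto
  finally show ?thesis .
next
  case False
  then have "odd p"
    using assms one_less_p prime_odd_nat by auto
  then show ?thesis
    using ap_count_ge_three_ap_bound[where s = 1 and s' = 1 and t = 2 and t' = "(p + 1) div 2"]
      mod_inverse_two one_less_p
    by (simp add: Lambda3_gff_eq_ap_count)
qed

end

end

theorem theorem1:
  fixes p n k :: nat and \<theta> \<delta> :: real and f g :: "(nat \<Rightarrow> nat) \<Rightarrow> real"
  assumes "prime p" and "n \<ge> 1"
    and "2 \<le> k" and "k \<le> p ^ n"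
    and "\<delta> \<ge> 0"
    and "\<forall>m\<in>Fv p n. 0 \<le> f m \<and> f m \<le> 1"
    and "\<forall>m\<in>Fv p n. 0 \<le> g m \<and> g m \<le> 1"
    and "\<forall>m\<in>Fv p n. f m \<ge> g m \<and> g m \<ge> 0"
    and "Ex p n f \<ge> Ex p n g"
    and "Ex p n g \<ge> max (real (p ^ n) powr (- \<theta>)) (8 / (sqrt (real p) * real k))"
    and "sigma p n (\<lambda>m. complex_of_real (f m)) k \<le> \<delta>\<^sup>2 * (real (p ^ n))\<^sup>2"
  shows "Lambda3 p n f g f \<ge>
           (1 / (real p)\<^sup>2) * (1 / real (k choose 2)) * real (p ^ n) powr (-4 * \<theta>) / 128
           - 9 * \<delta> * real (p ^ n) powr (-2 * \<theta>) / 8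
       \<and> Lambda3 p n g f f \<ge>
           (1 / (real p)\<^sup>2) * (1 / real (k choose 2)) * real (p ^ n) powr (-4 * \<theta>) / 128
           - 9 * \<delta> * real (p ^ n) powr (-2 * \<theta>) / 8"
proof -
  interpret mod_vectors p n
    using assms(1) by unfold_locales (rule prime_gt_1_nat)
  define \<beta> where "\<beta> = real (p ^ n) powr (- \<theta>)"
  have f: "\<forall>m\<in>Fv p n. 0 \<le> f m \<and> f m \<le> 1" and g: "\<forall>m\<in>Fv p n. 0 \<le> g m \<and> g m \<le> 1"
    and gf: "\<forall>m\<in>Fv p n. g m \<le> f m"
    using assms(6-8) by auto
  have \<beta>: "0 < \<beta>" "\<beta> \<le> Ex p n g"
    using assms(10) one_less_p by (simp_all add: \<beta>_def)
  have "sqrt (real p) \<le> real p"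
    using one_less_p by (intro real_le_lsqrt) (simp_all add: power2_eq_square)
  then have "1 / (real p * real k) \<le> 8 / (sqrt (real p) * real k)"
    using one_less_p assms(3) by (intro frac_le mult_right_mono) auto
  with assms(10) have dense: "1 / (real p * real k) \<le> Ex p n g"
    by simp
  have "real (p ^ n) powr (- 4 * \<theta>) = \<beta> ^ 4" "real (p ^ n) powr (- 2 * \<theta>) = \<beta>\<^sup>2"
    using one_less_p by (simp_all add: \<beta>_def powr_power)
  then show ?thesis
    using Lambda3_fgf_ge[OF f g gf assms(3,4,11,5) \<beta> dense]
      Lambda3_gff_ge[OF f g gf assms(3,4,11,5) \<beta> dense assms(1)]
    by simp
qed

end
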